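(* Let $\mathcal H$ be a Hilbert space, $(\mathsf H_t)_{t\ge0}$ a strongly continuous semigroup of symmetric operators on $\mathcal H$, $L$ its generator with domain $\mathcal D(L)$, and $\mathbb H_t(u)=(\mathsf H_tu,u)_{\mathcal H}$. Then: (i) if $u\in\mathcal D(L)$, then $\limsup_{t\to0^+}\frac{\mathbb H_0(u)-\mathbb H_t(u)}{t}\le(-Lu,u)_{\mathcal H}$; (ii) if $(t_k)\subset(0,\infty)$ is infinitesimal and $(u_k)\subset\mathcal H$ satisfies $u_k\to u$ in $\mathcal H$ for some $u\in\mathcal D(L)$, then $\liminf_{k\to\infty}\frac{\mathbb H_0(u_k)-\mathbb H_{t_k}(u_k)}{t_k}\ge(-Lu,u)_{\mathcal H}$. Consequently, the functionals $u\mapsto\frac{\mathbb H_0(u)-\mathbb H_t(u)}{t}$ converge as $t\to0^+$ to $u\mapsto(-Lu,u)_{\mathcal H}$ on $\mathcal D(L)$ pointwise and in the $\Gamma$-sense with respect to the strong topology of $\mathcal H$.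
   Context: A strongly continuous semigroup of symmetric operators on $\mathcal H$ is a family $(\mathsf H_t)_{t\ge0}$ of bounded self-adjoint operators with $\mathsf H_0=\mathrm{Id}$, $\mathsf H_{t+s}=\mathsf H_t\mathsf H_s$, $\|\mathsf H_tu\|\le\|u\|$, and $\mathsf H_tu\to u$ as $t\to0^+$ for every $u$. The generator is $Lu=\lim_{t\to0^+}(\mathsf H_tu-u)/t$ (strong limit), with $\mathcal D(L)$ the set of $u$ for which the limit exists. $\Gamma$-convergence on $\mathcal D(L)$: for every infinitesimal $(t_k)$, the liminf inequality of (ii) holds, and for every $u\in\mathcal D(L)$ there are $u_k\in\mathcal D(L)$, $u_k\to u$, with $\limsup$ of the functionals at $(t_k,u_k)$ at most $(-Lu,u)_{\mathcal H}$. *)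

theory Defs
  imports "HOL-Analysis.Analysis"
begin

text \<open>Strongly continuous semigroup of symmetric (bounded self-adjoint) contractions
  on a real Hilbert space. Only the values H t for t \<ge> 0 matter.\<close>
definition sym_semigroup :: "(real \<Rightarrow> 'a::{real_inner,complete_space} \<Rightarrow> 'a) \<Rightarrow> bool" where
  "sym_semigroup H \<longleftrightarrow>
     (\<forall>t\<ge>0. bounded_linear (H t)) \<and>
     (\<forall>t\<ge>0. \<forall>u v. inner (H t u) v = inner u (H t v)) \<and>
     (\<forall>u. H 0 u = u) \<and>
     (\<forall>t s. t \<ge> 0 \<longrightarrow> s \<ge> 0 \<longrightarrow> H (t + s) = H t \<circ> H s) \<and>
     (\<forall>t\<ge>0. \<forall>u. norm (H t u) \<le> norm u) \<and>
     (\<forall>u. ((\<lambda>t. H t u) \<longlongrightarrow> u) (at_right 0))"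

definition gen_domain :: "(real \<Rightarrow> 'a::real_normed_vector \<Rightarrow> 'a) \<Rightarrow> 'a set" where
  "gen_domain H = {u. \<exists>l. ((\<lambda>t. (H t u - u) /\<^sub>R t) \<longlongrightarrow> l) (at_right 0)}"

definition generator :: "(real \<Rightarrow> 'a::real_normed_vector \<Rightarrow> 'a) \<Rightarrow> 'a \<Rightarrow> 'a" where
  "generator H u = Lim (at_right 0) (\<lambda>t. (H t u - u) /\<^sub>R t)"

definition quad_form :: "(real \<Rightarrow> 'a::real_inner \<Rightarrow> 'a) \<Rightarrow> real \<Rightarrow> 'a \<Rightarrow> real" where
  "quad_form H t u = inner (H t u) u"

definition gamma_conv_right0 ::
  "(real \<Rightarrow> 'a::real_normed_vector \<Rightarrow> real) \<Rightarrow> ('a \<Rightarrow> real) \<Rightarrow> 'a set \<Rightarrow> bool" where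
  "gamma_conv_right0 F G D \<longleftrightarrow>
     (\<forall>t :: nat \<Rightarrow> real. (\<forall>k. t k > 0) \<and> t \<longlonglongrightarrow> 0 \<longrightarrow>
        (\<forall>u\<in>D. \<forall>uk :: nat \<Rightarrow> 'a. uk \<longlonglongrightarrow> u \<longrightarrow>
            Liminf sequentially (\<lambda>k. ereal (F (t k) (uk k))) \<ge> ereal (G u)) \<and>
        (\<forall>u\<in>D. \<exists>uk :: nat \<Rightarrow> 'a. (\<forall>k. uk k \<in> D) \<and> uk \<longlonglongrightarrow> u \<and>
            Limsup sequentially (\<lambda>k. ereal (F (t k) (uk k))) \<le> ereal (G u)))"

end

theory Submission
  imports Defs
begin

text \<open>Writing \<open>D\<^sub>t u = (H\<^sub>t u - u)/t\<close>, the functional equals \<open>(-D\<^sub>t u, u)\<close>, which converges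
  to \<open>(-L u, u)\<close>; this gives the pointwise limit, hence (i) and the recovery sequences.
  For (ii), symmetry and contractivity of \<open>H\<^sub>t\<close> give \<open>(H\<^sub>t(v - u), v - u) \<le> \<parallel>v - u\<parallel>\<^sup>2\<close>,
  which expands to the lower bound \<open>(-D\<^sub>t v, v) \<ge> 2 (v, -D\<^sub>t u) - (-D\<^sub>t u, u)\<close>: linear in \<open>v\<close>,
  so it passes to the limit along \<open>v = u\<^sub>k\<close>, \<open>t = t\<^sub>k\<close> and yields \<open>2 (u, -L u) - (-L u, u)\<close>.\<close>

lemma symmetric_contraction_inner_lower_bound:
  fixes A :: "'a::real_inner \<Rightarrow> 'a"
  assumes "linear A" and sym: "\<And>x y. inner (A x) y = inner x (A y)"
    and contr: "\<And>x. norm (A x) \<le> norm x"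
  shows "2 * inner v (u - A u) - inner (u - A u) u \<le> inner (v - A v) v"
proof -
  have "inner (A (v - u)) (v - u) \<le> norm (A (v - u)) * norm (v - u)"
    by (rule norm_cauchy_schwarz)
  also have "\<dots> \<le> norm (v - u) * norm (v - u)"
    by (simp add: contr mult_right_mono)
  also have "\<dots> = inner (v - u) (v - u)"
    by (simp flip: power2_eq_square power2_norm_eq_inner)
  finally have "inner (A (v - u)) (v - u) \<le> inner (v - u) (v - u)" .
  then show ?thesis
    using sym[of v u] sym[of u v]
    by (simp add: linear_diff[OF \<open>linear A\<close>] inner_diff_left inner_diff_right inner_commute
        algebra_simps)
qed

lemma generator_tendsto:
  assumes "u \<in> gen_domain H"
  shows "((\<lambda>t. (H t u - u) /\<^sub>R t) \<longlongrightarrow> generator H u) (at_right 0)"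
proof -
  obtain l where l: "((\<lambda>t. (H t u - u) /\<^sub>R t) \<longlongrightarrow> l) (at_right 0)"
    using assms unfolding gen_domain_def by blast
  then have "generator H u = l"
    unfolding generator_def by (rule tendsto_Lim[OF trivial_limit_at_right_real])
  with l show ?thesis by simp
qed

text \<open>No positivity of \<open>t\<close> is needed: at \<open>t = 0\<close> both sides vanish, since \<open>x / 0 = 0\<close>.\<close>
lemma quad_form_quotient_eq:
  assumes "H 0 u = u"
  shows "(quad_form H 0 u - quad_form H t u) / t = inner (- ((H t u - u) /\<^sub>R t)) u"
  using assms by (simp add: quad_form_def inner_diff_left divide_inverse algebra_simps)

lemma quad_form_quotient_tendsto:
  assumes "H 0 u = u" and "u \<in> gen_domain H"
  shows "((\<lambda>t. (quad_form H 0 u - quad_form H t u) / t) \<longlongrightarrow> inner (- generator H u) u)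
           (at_right 0)"
  unfolding quad_form_quotient_eq[of H u, OF assms(1)]
  by (intro tendsto_intros generator_tendsto assms(2))

lemma quad_form_quotient_lower_bound:
  assumes "sym_semigroup H" and "t > 0"
  shows "2 * inner v (- ((H t u - u) /\<^sub>R t)) - inner (- ((H t u - u) /\<^sub>R t)) u
           \<le> (quad_form H 0 v - quad_form H t v) / t"
proof -
  have H0: "H 0 v = v"
    using assms unfolding sym_semigroup_def by blast
  have "linear (H t)" "\<And>x y. inner (H t x) y = inner x (H t y)" "\<And>x. norm (H t x) \<le> norm x"
    using assms unfolding sym_semigroup_def by (auto intro: bounded_linear.linear)
  then have "2 * inner v (u - H t u) - inner (u - H t u) u \<le> inner (v - H t v) v"
    by (rule symmetric_contraction_inner_lower_bound)
  then have "(2 * inner v (u - H t u) - inner (u - H t u) u) / t \<le> inner (v - H t v) v / t"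
    using \<open>t > 0\<close> by (rule divide_right_mono[OF _ less_imp_le])
  then show ?thesis
    unfolding quad_form_quotient_eq[of H v, OF H0]
    by (simp add: inner_diff_left inner_diff_right divide_inverse algebra_simps)
qed

lemma filterlim_at_right_0_sequentially:
  fixes t :: "nat \<Rightarrow> real"
  assumes "\<forall>k. t k > 0" and "t \<longlonglongrightarrow> 0"
  shows "filterlim t (at_right 0) sequentially"
  using assms by (simp add: filterlim_at less_imp_neq[symmetric])

lemma quad_form_quotient_Liminf_ge:
  assumes "sym_semigroup H" and t_pos: "\<forall>k. t k > 0" and "t \<longlonglongrightarrow> 0"
    and "uk \<longlonglongrightarrow> u" and "u \<in> gen_domain H"
  shows "ereal (inner (- generator H u) u)
           \<le> Liminf sequentially
               (\<lambda>k. ereal ((quad_form H 0 (uk k) - quad_form H (t k) (uk k)) / t k))"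
proof -
  define D where "D k = - ((H (t k) u - u) /\<^sub>R t k)" for k
  define g where "g k = 2 * inner (uk k) (D k) - inner (D k) u" for k
  have "filterlim t (at_right 0) sequentially"
    using t_pos \<open>t \<longlonglongrightarrow> 0\<close> by (rule filterlim_at_right_0_sequentially)
  then have "D \<longlonglongrightarrow> - generator H u"
    unfolding D_def
    by (intro tendsto_minus filterlim_compose[OF generator_tendsto[OF \<open>u \<in> gen_domain H\<close>]])
  then have "g \<longlonglongrightarrow> 2 * inner u (- generator H u) - inner (- generator H u) u"
    unfolding g_def using \<open>uk \<longlonglongrightarrow> u\<close> by (intro tendsto_intros)
  then have "g \<longlonglongrightarrow> inner (- generator H u) u"
    by (simp add: inner_commute)
  then have "ereal (inner (- generator H u) u) = Liminf sequentially (\<lambda>k. ereal (g k))"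
    by (rule lim_imp_Liminf[OF sequentially_bot tendsto_ereal, symmetric])
  also have "\<dots> \<le> Liminf sequentially
               (\<lambda>k. ereal ((quad_form H 0 (uk k) - quad_form H (t k) (uk k)) / t k))"
    using quad_form_quotient_lower_bound[OF \<open>sym_semigroup H\<close>] t_pos
    by (intro Liminf_mono) (simp add: g_def D_def)
  finally show ?thesis .
qed

lemma gamma_conv_right0I:
  fixes F :: "real \<Rightarrow> 'a::real_normed_vector \<Rightarrow> real"
  assumes lim: "\<And>u. u \<in> D \<Longrightarrow> ((\<lambda>t. F t u) \<longlongrightarrow> G u) (at_right 0)"
    and liminf: "\<And>t uk u. \<forall>k. t k > 0 \<Longrightarrow> t \<longlonglongrightarrow> 0 \<Longrightarrow> uk \<longlonglongrightarrow> u \<Longrightarrow> u \<in> D \<Longrightarrow>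
                   ereal (G u) \<le> Liminf sequentially (\<lambda>k. ereal (F (t k) (uk k)))"
  shows "gamma_conv_right0 F G D"
  unfolding gamma_conv_right0_def
proof (intro allI impI conjI ballI)
  fix t :: "nat \<Rightarrow> real" and u
  assume t: "(\<forall>k. t k > 0) \<and> t \<longlonglongrightarrow> 0" and "u \<in> D"
  then show "ereal (G u) \<le> Liminf sequentially (\<lambda>k. ereal (F (t k) (uk k)))"
    if "uk \<longlonglongrightarrow> u" for uk
    using liminf that by blast
  have "filterlim t (at_right 0) sequentially"
    using t by (intro filterlim_at_right_0_sequentially) auto
  then have "(\<lambda>k. F (t k) u) \<longlonglongrightarrow> G u"
    by (rule filterlim_compose[OF lim[OF \<open>u \<in> D\<close>]])
  then have "Limsup sequentially (\<lambda>k. ereal (F (t k) u)) = ereal (G u)"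
    by (rule lim_imp_Limsup[OF sequentially_bot tendsto_ereal])
  with \<open>u \<in> D\<close> show "\<exists>uk. (\<forall>k. uk k \<in> D) \<and> uk \<longlonglongrightarrow> u \<and>
      Limsup sequentially (\<lambda>k. ereal (F (t k) (uk k))) \<le> ereal (G u)"
    by (intro exI[of _ "\<lambda>k. u"]) auto
qed

theorem theorem1p8:
  fixes H :: "real \<Rightarrow> 'a::{real_inner,complete_space} \<Rightarrow> 'a"
  assumes "sym_semigroup H"
  shows "(\<forall>u\<in>gen_domain H.
            Limsup (at_right 0) (\<lambda>t. ereal ((quad_form H 0 u - quad_form H t u) / t))
              \<le> ereal (inner (- generator H u) u))
       \<and> (\<forall>(t :: nat \<Rightarrow> real) (uk :: nat \<Rightarrow> 'a) u.
            (\<forall>k. t k > 0) \<longrightarrow> t \<longlonglongrightarrow> 0 \<longrightarrow> uk \<longlonglongrightarrow> u \<longrightarrow> u \<in> gen_domain H \<longrightarrow>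
            Liminf sequentially
              (\<lambda>k. ereal ((quad_form H 0 (uk k) - quad_form H (t k) (uk k)) / t k))
              \<ge> ereal (inner (- generator H u) u))
       \<and> (\<forall>u\<in>gen_domain H.
            ((\<lambda>t. (quad_form H 0 u - quad_form H t u) / t)
               \<longlongrightarrow> inner (- generator H u) u) (at_right 0))
       \<and> gamma_conv_right0 (\<lambda>t u. (quad_form H 0 u - quad_form H t u) / t)
           (\<lambda>u. inner (- generator H u) u) (gen_domain H)"
proof -
  have H0: "H 0 u = u" for u
    using assms unfolding sym_semigroup_def by blast
  have pointwise: "((\<lambda>t. (quad_form H 0 u - quad_form H t u) / t)
                      \<longlongrightarrow> inner (- generator H u) u) (at_right 0)"
    if "u \<in> gen_domain H" for u
    using quad_form_quotient_tendsto[OF H0 that] .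
  have limsup: "Limsup (at_right 0) (\<lambda>t. ereal ((quad_form H 0 u - quad_form H t u) / t))
                  \<le> ereal (inner (- generator H u) u)"
    if "u \<in> gen_domain H" for u
    using lim_imp_Limsup[OF trivial_limit_at_right_real tendsto_ereal[OF pointwise[OF that]]]
    by simp
  note liminf = quad_form_quotient_Liminf_ge[OF assms]
  have "gamma_conv_right0 (\<lambda>t u. (quad_form H 0 u - quad_form H t u) / t)
          (\<lambda>u. inner (- generator H u) u) (gen_domain H)"
    by (intro gamma_conv_right0I pointwise liminf)
  with limsup liminf pointwise show ?thesis by blast
qed

end
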